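(* Let $A,B,C\in\mathbb C^{2\times2}$ be Hermitian, let $\xi>0$ and $\varepsilon\ge 0$, and suppose $\Delta(B)=\lambda_{\max}(B)-\lambda_{\min}(B)>\xi$. If $\|[A,B]\|\le\varepsilon$ and $\|[B,C]\|\le\varepsilon$, then $$\|[A,C]\|\le\frac{2\varepsilon}{\xi}\Big(\|A\|+\|C\|+\frac{\varepsilon}{\xi}\Big).$$ In particular, if moreover $\|A\|\le1$, $\|C\|\le1$ and $\xi\ge\varepsilon>0$, then $\|[A,C]\|\le\frac{4\varepsilon}{\xi}+\frac{2\varepsilon^2}{\xi^2}\le\frac{6\varepsilon}{\xi}$.
   Context: $\|\cdot\|$ is the operator norm, $[X,Y]=XY-YX$; $\lambda_{\max},\lambda_{\min}$ denote the largest and smallest eigenvalues. *)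

theory Defs
  imports "HOL-Analysis.Analysis"
begin

text \<open>2x2 complex matrices are rendered as complex^2^2 (HOL-Analysis).
  The norm on complex^2 is the Euclidean (L2) norm, so the operator norm of a
  matrix M is onorm of the linear map x |-> M *v x.\<close>

definition hermitian2 :: "complex^2^2 \<Rightarrow> bool" where
  "hermitian2 M \<longleftrightarrow> (\<forall>i j. M $ i $ j = cnj (M $ j $ i))"

definition opnorm2 :: "complex^2^2 \<Rightarrow> real" where
  "opnorm2 M = onorm (\<lambda>x. M *v x)"

definition commutator2 :: "complex^2^2 \<Rightarrow> complex^2^2 \<Rightarrow> complex^2^2" where
  "commutator2 X Y = X ** Y - Y ** X"

definition eigvals2 :: "complex^2^2 \<Rightarrow> complex set" where
  "eigvals2 M = {c. \<exists>v. v \<noteq> 0 \<and> M *v v = c *s v}"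

text \<open>For a Hermitian matrix all eigenvalues are real; lambda_max / lambda_min
  are the largest / smallest of them (as reals).\<close>
definition lambda_max2 :: "complex^2^2 \<Rightarrow> real" where
  "lambda_max2 M = Max (Re ` eigvals2 M)"

definition lambda_min2 :: "complex^2^2 \<Rightarrow> real" where
  "lambda_min2 M = Min (Re ` eigvals2 M)"

end

theory Submission
  imports Defs "HOL-Analysis.Cross3"
begin

text \<open>A Hermitian 2x2 matrix is A = (tr A / 2) I + a \<cdot> \<sigma>, with Bloch vector a in R^3 and
  \<sigma> the Pauli matrices. Then [A, C] = 2i (a \<times> c) \<cdot> \<sigma>, the operator norm of w \<cdot> \<sigma> is |w|,
  ||A|| \<ge> |a|, and the eigenvalues of B are tr B / 2 \<plusminus> |b|, so its spectral gap is 2|b|.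
  This reduces the claim to cross products in R^3: since |b|^2 a = (a \<bullet> b) b + b \<times> (a \<times> b),
  and likewise for c,
  |a \<times> c| \<le> (|a| |b \<times> c| + |c| |a \<times> b|) / |b| + |a \<times> b| |b \<times> c| / |b|^2,
  where the hypotheses give |a \<times> b|, |b \<times> c| \<le> \<epsilon>/2 and |b| > \<xi>/2.\<close>

unbundle cross3_syntax

lemma norm_cross3_le: "norm (x \<times> y) \<le> norm x * norm y"
  by (metis norm_cross_dot le_add_same_cancel1 zero_le_power2 power2_le_imp_le
      norm_ge_zero zero_le_mult_iff)

lemma cross3_cross3_expand: "b \<times> (a \<times> b) = (b \<bullet> b) *\<^sub>R a - (a \<bullet> b) *\<^sub>R b"
  by (simp add: cross3_simps forall_3)

lemma norm_cross3_trans_le: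
  assumes "b \<noteq> 0"
  shows "norm (a \<times> c) \<le> (norm a * norm (b \<times> c) + norm c * norm (a \<times> b)) / norm b
                         + norm (a \<times> b) * norm (b \<times> c) / (norm b)^2"
proof -
  define n X Y where "n = norm b" and "X = norm (a \<times> b)" and "Y = norm (b \<times> c)"
  define P Q where "P = b \<times> (a \<times> b)" and "Q = b \<times> (c \<times> b)"
  have n: "n > 0"
    using assms by (simp add: n_def)
  have P: "norm P \<le> n * X"
    unfolding P_def n_def X_def by (rule norm_cross3_le)
  have Q: "norm Q \<le> n * Y"
    unfolding Q_def n_def Y_def by (metis cross_skew norm_minus_cancel norm_cross3_le)
  have ab: "\<bar>a \<bullet> b\<bar> \<le> norm a * n" and cb: "\<bar>c \<bullet> b\<bar> \<le> norm c * n"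
    unfolding n_def by (rule Cauchy_Schwarz_ineq2)+
  have "n^2 *\<^sub>R a = (a \<bullet> b) *\<^sub>R b + P" and "n^2 *\<^sub>R c = (c \<bullet> b) *\<^sub>R b + Q"
    by (simp_all add: P_def Q_def n_def cross3_cross3_expand power2_norm_eq_inner)
  then have "n^4 *\<^sub>R (a \<times> c) = ((a \<bullet> b) *\<^sub>R b + P) \<times> ((c \<bullet> b) *\<^sub>R b + Q)"
    by (metis cross_mult_left cross_mult_right scaleR_scaleR power2_eq_square power4_eq_xxxx)
  also have "\<dots> = (a \<bullet> b) *\<^sub>R (b \<times> Q) + (c \<bullet> b) *\<^sub>R (P \<times> b) + P \<times> Q"
    by (simp add: cross_add_left cross_add_right cross_mult_left cross_mult_right)
  finally have "n^4 * norm (a \<times> c) = norm ((a \<bullet> b) *\<^sub>R (b \<times> Q) + (c \<bullet> b) *\<^sub>R (P \<times> b) + P \<times> Q)"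
    by (metis n norm_scaleR abs_of_nonneg less_imp_le zero_le_power)
  also have "\<dots> \<le> norm ((a \<bullet> b) *\<^sub>R (b \<times> Q)) + norm ((c \<bullet> b) *\<^sub>R (P \<times> b)) + norm (P \<times> Q)"
    by (rule norm_triangle_le[OF add_mono[OF norm_triangle_ineq order_refl]])
  also have "\<dots> \<le> \<bar>a \<bullet> b\<bar> * (n * norm Q) + \<bar>c \<bullet> b\<bar> * (norm P * n) + norm P * norm Q"
    unfolding norm_scaleR n_def by (intro add_mono mult_left_mono norm_cross3_le) auto
  also have "\<dots> \<le> (norm a * n) * (n * (n * Y)) + (norm c * n) * ((n * X) * n) + (n * X) * (n * Y)"
    using n by (intro add_mono mult_mono ab cb P Q mult_left_mono mult_right_mono)
      (auto simp: X_def Y_def)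
  also have "\<dots> = n^4 * ((norm a * Y + norm c * X) / n + X * Y / n^2)"
    using n by (simp add: field_simps power2_eq_square power4_eq_xxxx)
  finally show ?thesis
    using n by (simp add: n_def X_def Y_def mult_le_cancel_left_pos)
qed

lemma norm_cross3_trans_le_small:
  assumes "2 * norm (a \<times> b) \<le> \<epsilon>" and "2 * norm (b \<times> c) \<le> \<epsilon>"
    and "\<xi> < 2 * norm b" and "\<xi> > 0"
  shows "2 * norm (a \<times> c) \<le> 2 * \<epsilon> / \<xi> * (norm a + norm c + \<epsilon> / \<xi>)"
proof -
  define X Y where "X = norm (a \<times> b)" and "Y = norm (b \<times> c)"
  have b: "b \<noteq> 0"
    using assms(3,4) by auto
  have inv: "1 / norm b \<le> 2 / \<xi>"
    using assms(3,4) by (simp add: divide_simps)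
  have X: "0 \<le> X" "X \<le> \<epsilon> / 2" and Y: "0 \<le> Y" "Y \<le> \<epsilon> / 2"
    using assms(1,2) by (auto simp: X_def Y_def)
  have "(norm a * Y + norm c * X) * (1 / norm b) \<le> (norm a * (\<epsilon>/2) + norm c * (\<epsilon>/2)) * (2 / \<xi>)"
    using X Y assms(4) by (intro mult_mono add_mono mult_left_mono inv) auto
  moreover have "(X * Y) * ((1 / norm b) * (1 / norm b)) \<le> ((\<epsilon>/2) * (\<epsilon>/2)) * ((2/\<xi>) * (2/\<xi>))"
    using X Y assms(4) by (intro mult_mono inv) auto
  ultimately have "norm (a \<times> c) \<le> (norm a * (\<epsilon>/2) + norm c * (\<epsilon>/2)) * (2 / \<xi>)
                                    + ((\<epsilon>/2) * (\<epsilon>/2)) * ((2/\<xi>) * (2/\<xi>))"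
    using norm_cross3_trans_le[OF b, of a c] by (simp add: X_def Y_def power2_eq_square)
  also have "\<dots> = \<epsilon> / \<xi> * (norm a + norm c + \<epsilon> / \<xi>)"
    using assms(4) by (simp add: field_simps)
  finally show ?thesis
    by simp
qed

lemma commutator_bound_unit_norms:
  fixes \<alpha> \<gamma> \<xi> \<epsilon> :: real
  assumes "\<alpha> \<le> 1" and "\<gamma> \<le> 1" and "0 < \<xi>" and "0 \<le> \<epsilon>" and "\<epsilon> \<le> \<xi>"
  shows "2 * \<epsilon> / \<xi> * (\<alpha> + \<gamma> + \<epsilon> / \<xi>) \<le> 4 * \<epsilon> / \<xi> + 2 * \<epsilon>^2 / \<xi>^2"
    and "4 * \<epsilon> / \<xi> + 2 * \<epsilon>^2 / \<xi>^2 \<le> 6 * \<epsilon> / \<xi>"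
proof -
  have "2 * \<epsilon> / \<xi> * (\<alpha> + \<gamma> + \<epsilon> / \<xi>) \<le> 2 * \<epsilon> / \<xi> * (2 + \<epsilon> / \<xi>)"
    using assms by (intro mult_left_mono) auto
  also have "\<dots> = 4 * \<epsilon> / \<xi> + 2 * \<epsilon>^2 / \<xi>^2"
    using assms(3) by (simp add: field_simps power2_eq_square)
  finally show "2 * \<epsilon> / \<xi> * (\<alpha> + \<gamma> + \<epsilon> / \<xi>) \<le> 4 * \<epsilon> / \<xi> + 2 * \<epsilon>^2 / \<xi>^2" .
  have "(\<epsilon> / \<xi>)^2 \<le> \<epsilon> / \<xi>"
    using assms unfolding power2_eq_square by (intro mult_left_le_one_le) auto
  then show "4 * \<epsilon> / \<xi> + 2 * \<epsilon>^2 / \<xi>^2 \<le> 6 * \<epsilon> / \<xi>"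
    by (simp add: power_divide)
qed

text \<open>For Hermitian A, A = (tr A / 2) I + a1 \<sigma>x + a2 \<sigma>y + a3 \<sigma>z with a = bloch A,
  where \<sigma>x, \<sigma>y, \<sigma>z are the Pauli matrices.\<close>

definition bloch :: "complex^2^2 \<Rightarrow> real^3" where
  "bloch M = vector [Re (M$1$2), - Im (M$1$2), (Re (M$1$1) - Re (M$2$2)) / 2]"

text \<open>i_pauli w = i (w1 \<sigma>x + w2 \<sigma>y + w3 \<sigma>z)\<close>

definition i_pauli :: "real^3 \<Rightarrow> complex^2^2" where
  "i_pauli w = vector [vector [\<i> * of_real (w$3), \<i> * of_real (w$1) + of_real (w$2)],
                       vector [\<i> * of_real (w$1) - of_real (w$2), - \<i> * of_real (w$3)]]"

lemma hermitian2_entries: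
  assumes "hermitian2 A"
  shows "Im (A$1$1) = 0" and "Im (A$2$2) = 0" and "A$2$1 = cnj (A$1$2)"
  using assms unfolding hermitian2_def
  by (metis cnj.sel(2) neg_equal_zero)+

lemma commutator2_hermitian2:
  assumes "hermitian2 A" and "hermitian2 C"
  shows "commutator2 A C = i_pauli (2 *\<^sub>R (bloch A \<times> bloch C))"
  using hermitian2_entries[OF assms(1)] hermitian2_entries[OF assms(2)]
  unfolding commutator2_def i_pauli_def bloch_def
  by (simp add: vec_eq_iff forall_2 matrix_matrix_mult_def sum_2 complex_eq_iff cross3_def
      algebra_simps)
    (simp add: field_simps)

lemma norm_complex2_power2:
  "(norm (x :: complex^2))^2 = (Re (x$1))^2 + (Im (x$1))^2 + (Re (x$2))^2 + (Im (x$2))^2"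
  by (simp add: norm_vec_def L2_set_def sum_2 cmod_power2)

lemma norm_real3_power2: "(norm (w :: real^3))^2 = (w$1)^2 + (w$2)^2 + (w$3)^2"
  by (simp add: norm_vec_def L2_set_def sum_3)

lemma norm_bloch_power2:
  "(norm (bloch M))^2 = (Re (M$1$2))^2 + (Im (M$1$2))^2 + ((Re (M$1$1) - Re (M$2$2)) / 2)^2"
  unfolding norm_real3_power2 by (simp add: bloch_def)

lemma norm_i_pauli_mult: "norm (i_pauli w *v x) = norm w * norm x"
proof -
  have "(norm (i_pauli w *v x))^2 = (norm w * norm x)^2"
    unfolding power_mult_distrib norm_complex2_power2 norm_real3_power2
    by (simp add: i_pauli_def matrix_vector_mult_def sum_2 power2_eq_square algebra_simps)
  then show ?thesis
    by (simp add: power2_eq_iff_nonneg)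
qed

lemma norm_mult_le_opnorm2: "norm (M *v x) \<le> opnorm2 M * norm x"
  unfolding opnorm2_def by (rule onorm) simp

lemma opnorm2_i_pauli: "opnorm2 (i_pauli w) = norm w"
proof (rule antisym)
  show "opnorm2 (i_pauli w) \<le> norm w"
    unfolding opnorm2_def by (rule onorm_le) (simp add: norm_i_pauli_mult)
  show "norm w \<le> opnorm2 (i_pauli w)"
    using norm_mult_le_opnorm2[of "i_pauli w" "axis 1 1"] by (simp add: norm_i_pauli_mult)
qed

lemma norm_bloch_le_opnorm2:
  assumes "hermitian2 A"
  shows "norm (bloch A) \<le> opnorm2 A"
proof -
  define p q s where "p = Re (A$1$1)" and "q = Re (A$2$2)"
    and "s = (Re (A$1$2))^2 + (Im (A$1$2))^2"
  note A = hermitian2_entries[OF assms]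
  have col1: "(norm (A *v axis 1 1))^2 = p^2 + s"
    unfolding norm_complex2_power2 using A
    by (simp add: matrix_vector_mult_def sum_2 axis_def p_def s_def)
  have col2: "(norm (A *v axis 2 1))^2 = q^2 + s"
    unfolding norm_complex2_power2 using A
    by (simp add: matrix_vector_mult_def sum_2 axis_def q_def s_def)
  have bloch: "(norm (bloch A))^2 = s + ((p - q) / 2)^2"
    by (simp add: norm_bloch_power2 p_def q_def s_def)
  have "((p - q) / 2)^2 \<le> max (p^2) (q^2)"
    using zero_le_power2[of "p + q"] by (simp add: max_def power2_eq_square field_simps)
  then have "(norm (bloch A))^2 \<le> (norm (A *v axis 1 1))^2
             \<or> (norm (bloch A))^2 \<le> (norm (A *v axis 2 1))^2"
    unfolding bloch col1 col2 by (auto simp: max_def split: if_splits)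
  then have "norm (bloch A) \<le> norm (A *v axis 1 1) \<or> norm (bloch A) \<le> norm (A *v axis 2 1)"
    by (auto intro: power2_le_imp_le)
  then show ?thesis
    using norm_mult_le_opnorm2[of A "axis 1 1"] norm_mult_le_opnorm2[of A "axis 2 1"] by auto
qed

lemma hermitian2_eigvals2_cases:
  assumes "hermitian2 B" and "c \<in> eigvals2 B"
  shows "c = of_real ((Re (B$1$1) + Re (B$2$2)) / 2 + norm (bloch B))
       \<or> c = of_real ((Re (B$1$1) + Re (B$2$2)) / 2 - norm (bloch B))"
proof -
  define p q w r where "p = Re (B$1$1)" and "q = Re (B$2$2)" and "w = B$1$2"
    and "r = norm (bloch B)"
  have B11: "B$1$1 = of_real p" and B22: "B$2$2 = of_real q" and B21: "B$2$1 = cnj w"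
    using hermitian2_entries[OF assms(1)] by (simp_all add: p_def q_def w_def complex_eq_iff)
  have r: "r^2 = (Re w)^2 + (Im w)^2 + ((p - q) / 2)^2"
    by (simp add: r_def norm_bloch_power2 p_def q_def w_def)
  obtain v where "v \<noteq> 0" and "B *v v = c *s v"
    using assms(2) unfolding eigvals2_def by auto
  then have row1: "of_real p * v$1 + w * v$2 = c * v$1"
    and row2: "cnj w * v$1 + of_real q * v$2 = c * v$2"
    and v: "v$1 \<noteq> 0 \<or> v$2 \<noteq> 0"
    by (auto simp: vec_eq_iff forall_2 matrix_vector_mult_def sum_2 B11 B22 B21 w_def)
  have "((c - of_real p) * (c - of_real q) - w * cnj w) * v$1 = 0"
    and "((c - of_real p) * (c - of_real q) - w * cnj w) * v$2 = 0"
    using row1 row2 by algebra+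
  then have char: "(c - of_real p) * (c - of_real q) - w * cnj w = 0"
    using v by auto
  have "(c - of_real ((p + q) / 2 + r)) * (c - of_real ((p + q) / 2 - r))
        = (c - of_real p) * (c - of_real q) - w * cnj w"
    using r by (simp add: complex_eq_iff algebra_simps power2_eq_square) (simp add: field_simps)
  then show ?thesis
    using char by (simp add: p_def q_def r_def)
qed

lemma hermitian2_eigvals2_nonempty:
  assumes "hermitian2 B"
  shows "eigvals2 B \<noteq> {}"
proof -
  define p q w r where "p = Re (B$1$1)" and "q = Re (B$2$2)" and "w = B$1$2"
    and "r = norm (bloch B)"
  have B11: "B$1$1 = of_real p" and B22: "B$2$2 = of_real q" and B21: "B$2$1 = cnj w"
    using hermitian2_entries[OF assms(1)] by (simp_all add: p_def q_def w_def complex_eq_iff)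
  have r: "r^2 = (Re w)^2 + (Im w)^2 + ((p - q) / 2)^2"
    by (simp add: r_def norm_bloch_power2 p_def q_def w_def)
  obtain l v where "v \<noteq> 0" and "B *v v = l *s v"
  proof (cases "w = 0")
    case True
    have "B *v axis 1 1 = B$1$1 *s axis 1 1"
      using True B21 by (auto simp: vec_eq_iff forall_2 matrix_vector_mult_def sum_2 axis_def w_def)
    then show ?thesis
      using that[of "axis 1 1"] by (simp add: axis_eq_0_iff)
  next
    case False
    define v :: "complex^2" where "v = vector [of_real ((p - q) / 2 + r), cnj w]"
    have "v \<noteq> 0"
      using False unfolding v_def by (auto simp: vec_eq_iff forall_2)
    moreover have "B *v v = of_real ((p + q) / 2 + r) *s v"
      using B11 B22 B21 r unfolding v_def w_def
      by (simp add: vec_eq_iff forall_2 matrix_vector_mult_def sum_2 complex_eq_iff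
          algebra_simps power2_eq_square)
        (simp add: field_simps)
    ultimately show ?thesis
      using that by blast
  qed
  then show ?thesis
    unfolding eigvals2_def by blast
qed

lemma hermitian2_spectral_gap_le:
  assumes "hermitian2 B"
  shows "lambda_max2 B - lambda_min2 B \<le> 2 * norm (bloch B)"
proof -
  define m where "m = (Re (B$1$1) + Re (B$2$2)) / 2"
  have sub: "Re ` eigvals2 B \<subseteq> {m + norm (bloch B), m - norm (bloch B)}"
    using hermitian2_eigvals2_cases[OF assms] unfolding m_def by fastforce
  then have "finite (Re ` eigvals2 B)"
    by (rule finite_subset) simp
  moreover have "Re ` eigvals2 B \<noteq> {}"
    using hermitian2_eigvals2_nonempty[OF assms] by simp
  ultimately have "lambda_max2 B \<le> m + norm (bloch B)" and "m - norm (bloch B) \<le> lambda_min2 B"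
    using sub unfolding lambda_max2_def lambda_min2_def by (auto simp: Max_le_iff Min_ge_iff)
  then show ?thesis
    by linarith
qed

theorem lemma3p6:
  fixes A B C :: "complex^2^2" and \<xi> \<epsilon> :: real
  assumes "hermitian2 A" and "hermitian2 B" and "hermitian2 C"
    and "\<xi> > 0" and "\<epsilon> \<ge> 0"
    and "lambda_max2 B - lambda_min2 B > \<xi>"
    and "opnorm2 (commutator2 A B) \<le> \<epsilon>"
    and "opnorm2 (commutator2 B C) \<le> \<epsilon>"
  shows "opnorm2 (commutator2 A C) \<le> 2 * \<epsilon> / \<xi> * (opnorm2 A + opnorm2 C + \<epsilon> / \<xi>)
    \<and> (opnorm2 A \<le> 1 \<and> opnorm2 C \<le> 1 \<and> \<xi> \<ge> \<epsilon> \<and> \<epsilon> > 0 \<longrightarrow>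
         opnorm2 (commutator2 A C) \<le> 4 * \<epsilon> / \<xi> + 2 * \<epsilon>^2 / \<xi>^2
         \<and> 4 * \<epsilon> / \<xi> + 2 * \<epsilon>^2 / \<xi>^2 \<le> 6 * \<epsilon> / \<xi>)"
proof -
  have "2 * norm (bloch A \<times> bloch B) \<le> \<epsilon>" and "2 * norm (bloch B \<times> bloch C) \<le> \<epsilon>"
    using assms(7,8) by (simp_all add: commutator2_hermitian2 assms(1-3) opnorm2_i_pauli)
  moreover have "\<xi> < 2 * norm (bloch B)"
    using hermitian2_spectral_gap_le[OF assms(2)] assms(6) by linarith
  ultimately have "opnorm2 (commutator2 A C)
      \<le> 2 * \<epsilon> / \<xi> * (norm (bloch A) + norm (bloch C) + \<epsilon> / \<xi>)"
    using norm_cross3_trans_le_small assms(4)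
    by (simp add: commutator2_hermitian2 assms(1,3) opnorm2_i_pauli)
  also have "\<dots> \<le> 2 * \<epsilon> / \<xi> * (opnorm2 A + opnorm2 C + \<epsilon> / \<xi>)"
    using norm_bloch_le_opnorm2 assms(1,3-5) by (intro mult_left_mono add_mono) auto
  finally have "opnorm2 (commutator2 A C) \<le> 2 * \<epsilon> / \<xi> * (opnorm2 A + opnorm2 C + \<epsilon> / \<xi>)" .
  with commutator_bound_unit_norms[of "opnorm2 A" "opnorm2 C" \<xi> \<epsilon>] assms(4,5) show ?thesis
    by (meson order_trans)
qed

end
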